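(* Let $s:\mathcal{X}\times\mathcal{Y}\to\mathbb{R}$ be measurable, $S_1,\dots,S_d$ probability distributions on $\mathcal{X}\times\mathcal{Y}$, $f$ a function as described in the context and $\rho>0$. Let $F_1,\dots,F_d$ be the c.d.f.'s of $s\#S_1,\dots,s\#S_d$ and $F_{\min}(x)=\min_{1\le i\le d}F_i(x)$. Let $$\mathcal{P}_{f,\rho}\coloneqq\{S\text{ a distribution on }\mathbb{R}:\exists S_0\in\mathcal{CH}(s\#S_1,\dots,s\#S_d),\ D_f(S\Vert S_0)\le\rho\}$$ and $\widetilde F(t;\mathcal{P}_{f,\rho})\coloneqq\inf_{P\in\mathcal{P}_{f,\rho}}P(S\le t)$. Then for every $t\in\mathbb{R}$, $$\widetilde F(t;\mathcal{P}_{f,\rho})=g_{f,\rho}\left(F_1(t),\dots,F_d(t)\right)=g_{f,\rho}\left(F_{\min}(t)\right).$$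
   Context: $f:\mathbb{R}\to\mathbb{R}\cup\{+\infty\}$ is a closed convex function with $f(1)=0$ and $f(t)=+\infty$ for $t<0$; for $P\ll Q$, $D_f(P\Vert Q)\coloneqq\int f\left(\frac{dP}{dQ}\right)dQ$. $\mathcal{CH}(P_1,\dots,P_d)\coloneqq\{\sum_i\lambda_iP_i:\lambda_i\ge0,\sum_i\lambda_i=1\}$; $s\#T$ is the push-forward $(s\#T)(A)=T(s^{-1}(A))$. With $h(z,\beta)\coloneqq\beta f(z/\beta)+(1-\beta)f((1-z)/(1-\beta))$, define for $\beta_1,\dots,\beta_d\in[0,1]$: $g_{f,\rho}(\beta_1,\dots,\beta_d)\coloneqq\inf\{z\in[0,1]:\inf_{\lambda\ge0,\sum_i\lambda_i=1}h(z,\sum_i\lambda_i\beta_i)\le\rho\}$; for $d=1$, $g_{f,\rho}(\beta)=\inf\{z\in[0,1]:h(z,\beta)\le\rho\}$. *)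

theory Defs
  imports "HOL-Probability.Probability"
begin

definition admissible_f :: "(real \<Rightarrow> ereal) \<Rightarrow> bool" where
  "admissible_f f \<longleftrightarrow>
     (\<forall>x. f x \<noteq> -\<infinity>) \<and>
     (\<forall>x y u. 0 < u \<and> u < 1 \<longrightarrow>
        f ((1 - u) * x + u * y) \<le> ereal (1 - u) * f x + ereal u * f y) \<and>
     (\<forall>c. closed {x. f x \<le> c}) \<and>
     f 1 = 0 \<and>
     (\<forall>t<0. f t = \<infinity>)"

text \<open>f-divergence D_f(P||Q) = \<integral> f(dP/dQ) dQ, for P \<ll> Q, as an extended real
  (positive part minus negative part).\<close>
definition f_div :: "(real \<Rightarrow> ereal) \<Rightarrow> 'a measure \<Rightarrow> 'a measure \<Rightarrow> ereal" where
  "f_div f P Q =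
     enn2ereal (\<integral>\<^sup>+ x. e2ennreal (f (enn2real (RN_deriv Q P x))) \<partial>Q)
   - enn2ereal (\<integral>\<^sup>+ x. e2ennreal (- f (enn2real (RN_deriv Q P x))) \<partial>Q)"

text \<open>Perspective b * f(a / b), with the convention (consistent with the absolute-continuity
  requirement in D_f) that 0 * f(0/0) = 0 and 0 * f(a/0) = +\<infinity> for a > 0.\<close>
definition persp :: "(real \<Rightarrow> ereal) \<Rightarrow> real \<Rightarrow> real \<Rightarrow> ereal" where
  "persp f b a = (if b > 0 then ereal b * f (a / b) else if a = 0 then 0 else \<infinity>)"

definition hfun :: "(real \<Rightarrow> ereal) \<Rightarrow> real \<Rightarrow> real \<Rightarrow> ereal" where
  "hfun f z \<beta> = persp f \<beta> z + persp f (1 - \<beta>) (1 - z)"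

definition wsimplex :: "nat \<Rightarrow> (nat \<Rightarrow> real) set" where
  "wsimplex d = {w. (\<forall>i\<in>{1..d}. 0 \<le> w i) \<and> (\<Sum>i=1..d. w i) = 1}"

definition g_vec :: "(real \<Rightarrow> ereal) \<Rightarrow> real \<Rightarrow> nat \<Rightarrow> (nat \<Rightarrow> real) \<Rightarrow> real" where
  "g_vec f \<rho> d \<beta> =
     Inf {z \<in> {0..1}. (INF w\<in>wsimplex d. hfun f z (\<Sum>i=1..d. w i * \<beta> i)) \<le> ereal \<rho>}"

definition g_one :: "(real \<Rightarrow> ereal) \<Rightarrow> real \<Rightarrow> real \<Rightarrow> real" where
  "g_one f \<rho> \<beta> = Inf {z \<in> {0..1}. hfun f z \<beta> \<le> ereal \<rho>}"

definition in_conv_hull :: "nat \<Rightarrow> (nat \<Rightarrow> 'a measure) \<Rightarrow> ('a \<Rightarrow> real) \<Rightarrow> real measure \<Rightarrow> bool" where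
  "in_conv_hull d S s S0 \<longleftrightarrow>
     sets S0 = sets borel \<and>
     (\<exists>w\<in>wsimplex d. \<forall>A\<in>sets borel.
        emeasure S0 A = (\<Sum>i=1..d. ennreal (w i) * emeasure (distr (S i) borel s) A))"

text \<open>The ambiguity set P_{f,\<rho>}: distributions S on the reals with D_f(S||S0) \<le> \<rho>
  for some S0 in the convex hull (D_f only defined, hence required, for S \<ll> S0).\<close>
definition amb_set :: "(real \<Rightarrow> ereal) \<Rightarrow> real \<Rightarrow> nat \<Rightarrow> (nat \<Rightarrow> 'a measure) \<Rightarrow> ('a \<Rightarrow> real)
    \<Rightarrow> real measure set" where
  "amb_set f \<rho> d S s = {P. prob_space P \<and> sets P = sets borel \<and>
     (\<exists>S0. in_conv_hull d S s S0 \<and> absolutely_continuous S0 P \<and> f_div f P S0 \<le> ereal \<rho>)}"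

definition push_cdf :: "'a measure \<Rightarrow> ('a \<Rightarrow> real) \<Rightarrow> real \<Rightarrow> real" where
  "push_cdf S s x = measure (distr S borel s) {..x}"

definition worst_cdf :: "(real \<Rightarrow> ereal) \<Rightarrow> real \<Rightarrow> nat \<Rightarrow> (nat \<Rightarrow> 'a measure) \<Rightarrow> ('a \<Rightarrow> real)
    \<Rightarrow> real \<Rightarrow> real" where
  "worst_cdf f \<rho> d S s t = Inf ((\<lambda>P. measure P {..t}) ` amb_set f \<rho> d S s)"

end

theory Submission
  imports Defs
begin

text \<open>
  Lower bound: if P is within divergence \<rho> of S_0 = \<Sum>_i w_i s#S_i, the data processing
  inequality for the partition {S \<le> t, S > t} gives h(P(S \<le> t), S_0(S \<le> t)) \<le> \<rho>, and
  S_0(S \<le> t) = \<Sum>_i w_i F_i(t) \<ge> F_min(t). As h(z, \<beta>) is nondecreasing in \<beta> \<in> [z, 1] (convexity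
  of f and f(1) = 0), either P(S \<le> t) \<ge> F_min(t) or h(P(S \<le> t), F_min(t)) \<le> \<rho>; in both
  cases P(S \<le> t) \<ge> g(F_min(t)). Attainment: if F_k(t) = F_min(t) = \<beta>, the measure with
  density z/\<beta> on {S \<le> t} and (1 - z)/(1 - \<beta>) elsewhere with respect to s#S_k has
  divergence exactly h(z, \<beta>). The same monotonicity shows that the infimum over the simplex
  in g(F_1(t), ..., F_d(t)) is attained at the vertex k.

  The data processing inequality is Jensen's inequality on each cell of the partition, which
  holds because the closed convex f is the supremum of its affine minorants.
\<close>

section \<open>Affine minorants of admissible functions\<close>

lemma admissible_f_not_MInf: "admissible_f f \<Longrightarrow> f x \<noteq> -\<infinity>"
  unfolding admissible_f_def by blast

lemma admissible_f_one: "admissible_f f \<Longrightarrow> f 1 = 0"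
  unfolding admissible_f_def by blast

lemma admissible_f_convex:
  assumes adm: "admissible_f f" and u: "0 \<le> u" "u \<le> 1"
  shows "f ((1 - u) * x + u * y) \<le> ereal (1 - u) * f x + ereal u * f y"
proof -
  consider "u = 0" | "u = 1" | "0 < u \<and> u < 1" using u by linarith
  then show ?thesis
    by cases (use adm in \<open>auto simp: zero_ereal_def[symmetric] admissible_f_def\<close>)
qed

lemma admissible_f_borel_measurable:
  assumes "admissible_f f"
  shows "f \<in> borel_measurable borel"
proof (rule borel_measurableI_le)
  fix y
  have "closed {x. f x \<le> y}" using assms unfolding admissible_f_def by blast
  then show "{x \<in> space borel. f x \<le> y} \<in> sets borel" by simp
qed

definition ereal_epigraph :: "(real \<Rightarrow> ereal) \<Rightarrow> (real \<times> real) set" where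
  "ereal_epigraph f = {p. f (fst p) \<le> ereal (snd p)}"

lemma convex_ereal_epigraph:
  assumes adm: "admissible_f f"
  shows "convex (ereal_epigraph f)"
  unfolding convex_def ereal_epigraph_def
proof (intro ballI allI impI)
  fix p q :: "real \<times> real" and u v :: real
  assume p: "p \<in> {p. f (fst p) \<le> ereal (snd p)}" and q: "q \<in> {p. f (fst p) \<le> ereal (snd p)}"
    and uv: "0 \<le> u" "0 \<le> v" "u + v = 1"
  have u: "u = 1 - v" using uv by simp
  have "f (fst (u *\<^sub>R p + v *\<^sub>R q)) = f ((1 - v) * fst p + v * fst q)" using u by simp
  also have "\<dots> \<le> ereal (1 - v) * f (fst p) + ereal v * f (fst q)"
    using admissible_f_convex[OF adm, of v] uv by simp
  also have "\<dots> \<le> ereal (1 - v) * ereal (snd p) + ereal v * ereal (snd q)"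
    using p q uv u by (intro add_mono ereal_mult_left_mono) auto
  also have "\<dots> = ereal (snd (u *\<^sub>R p + v *\<^sub>R q))" using u by simp
  finally show "u *\<^sub>R p + v *\<^sub>R q \<in> {p. f (fst p) \<le> ereal (snd p)}" by simp
qed

lemma closed_ereal_epigraph:
  assumes adm: "admissible_f f"
  shows "closed (ereal_epigraph f)"
  unfolding closed_sequential_limits ereal_epigraph_def
proof (intro allI impI, elim conjE)
  fix X :: "nat \<Rightarrow> real \<times> real" and l
  assume X: "\<forall>n. X n \<in> {p. f (fst p) \<le> ereal (snd p)}" and lim: "X \<longlonglongrightarrow> l"
  have sublevel_closed: "\<And>c. closed {x. f x \<le> c}" using adm unfolding admissible_f_def by blast
  have fst_lim: "(\<lambda>n. fst (X n)) \<longlonglongrightarrow> fst l" and snd_lim: "(\<lambda>n. snd (X n)) \<longlonglongrightarrow> snd l"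
    using lim by (auto intro: tendsto_fst tendsto_snd)
  have "f (fst l) \<le> ereal (snd l) + ereal e" if e: "e > 0" for e
  proof -
    have "eventually (\<lambda>n. snd (X n) < snd l + e) sequentially"
      by (rule order_tendstoD(2)[OF snd_lim]) (use e in simp)
    then have "eventually (\<lambda>n. fst (X n) \<in> {x. f x \<le> ereal (snd l + e)}) sequentially"
    proof (rule eventually_mono)
      fix n assume "snd (X n) < snd l + e"
      then show "fst (X n) \<in> {x. f x \<le> ereal (snd l + e)}"
        using X order_trans[of "f (fst (X n))" "ereal (snd (X n))"] by force
    qed
    then have "fst l \<in> {x. f x \<le> ereal (snd l + e)}"
      by (rule Lim_in_closed_set[OF sublevel_closed _ trivial_limit_sequentially fst_lim])
    then show ?thesis by simp
  qed
  then have "f (fst l) \<le> ereal (snd l)" by (rule ereal_le_epsilon2)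
  then show "l \<in> {p. f (fst p) \<le> ereal (snd p)}" by simp
qed

text \<open>The separating line cannot have negative slope in the y-direction, because the
  epigraph contains the upward ray above (1, 0).\<close>
lemma admissible_f_separation:
  assumes adm: "admissible_f f" and c: "ereal c < f m"
  obtains a1 a2 b where "0 \<le> a2" "a1 * m + a2 * c < b"
    "\<And>x y. f x \<le> ereal y \<Longrightarrow> b < a1 * x + a2 * y"
proof -
  have "(m, c) \<notin> ereal_epigraph f" using c by (simp add: ereal_epigraph_def)
  from separating_hyperplane_closed_point[OF convex_ereal_epigraph[OF adm]
      closed_ereal_epigraph[OF adm] this]
  obtain a b where ab: "inner a (m, c) < b" "\<forall>p\<in>ereal_epigraph f. b < inner a p"
    by blast
  obtain a1 a2 where a: "a = (a1, a2)" by (cases a)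
  have sep: "b < a1 * x + a2 * y" if "f x \<le> ereal y" for x y
    using ab(2) that a by (auto simp: ereal_epigraph_def)
  have "0 \<le> a2"
  proof (rule ccontr)
    assume "\<not> 0 \<le> a2"
    define y where "y = (\<bar>a1\<bar> + \<bar>b\<bar> + 1) / (- a2)"
    have "0 < - a2" using \<open>\<not> 0 \<le> a2\<close> by simp
    have "0 \<le> y" unfolding y_def by (rule divide_nonneg_pos) (use \<open>0 < - a2\<close> in auto)
    then have "b < a1 * 1 + a2 * y"
      using sep[of 1 y] admissible_f_one[OF adm] by simp
    moreover have "a2 * y = - (\<bar>a1\<bar> + \<bar>b\<bar> + 1)" using \<open>0 < - a2\<close> by (simp add: y_def)
    ultimately show False by linarith
  qed
  with that sep ab(1) a show thesis by simp
qed

lemma nonvertical_separation_minorant: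
  assumes sep: "\<And>x y. f x \<le> ereal y \<Longrightarrow> b < a1 * x + a2 * y"
    and a2: "0 < a2" and not_MInf: "f x \<noteq> -\<infinity>"
  shows "ereal (b / a2 + (- a1 / a2) * x) \<le> f x"
proof (cases "f x")
  case (real y)
  then have "b < a1 * x + a2 * y" using sep by simp
  then show ?thesis using real a2 by (simp add: field_simps)
qed (use not_MInf in auto)

text \<open>A vertical separating line (a2 = 0) is tilted by adding a multiple of it to a
  nonvertical minorant, which exists because (1, -1) lies strictly below the graph.\<close>
lemma admissible_f_affine_minorant:
  assumes adm: "admissible_f f" and c: "ereal c < f m"
  obtains p q where "\<And>x. ereal (p + q * x) \<le> f x" "c < p + q * m"
proof -
  note not_MInf = admissible_f_not_MInf[OF adm]
  obtain a1 a2 b where a2: "0 \<le> a2" and below: "a1 * m + a2 * c < b"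
    and sep: "\<And>x y. f x \<le> ereal y \<Longrightarrow> b < a1 * x + a2 * y"
    using admissible_f_separation[OF adm c] by metis
  obtain p0 q0 where min0: "\<And>x. ereal (p0 + q0 * x) \<le> f x"
  proof -
    have "ereal (-1) < f 1" using admissible_f_one[OF adm] by simp
    then obtain a1' a2' b' where "a1' * 1 + a2' * (-1) < b'"
      and sep': "\<And>x y. f x \<le> ereal y \<Longrightarrow> b' < a1' * x + a2' * y"
      using admissible_f_separation[OF adm] by metis
    moreover have "b' < a1' * 1 + a2' * 0" using sep'[of 1 0] admissible_f_one[OF adm] by simp
    ultimately have "0 < a2'" by linarith
    from nonvertical_separation_minorant[OF sep' this not_MInf] show thesis by (rule that)
  qed
  show thesis
  proof (cases "a2 = 0")
    case False
    then have "0 < a2" using a2 by simp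
    have "c < b / a2 + (- a1 / a2) * m" using below \<open>0 < a2\<close> by (simp add: field_simps)
    with nonvertical_separation_minorant[OF sep \<open>0 < a2\<close> not_MInf] show thesis by (rule that)
  next
    case True
    have pos: "0 < b - a1 * m" using below True by simp
    define K where "K = (\<bar>c - p0 - q0 * m\<bar> + 1) / (b - a1 * m)"
    have "0 \<le> K" using pos by (simp add: K_def)
    have "ereal (p0 + q0 * x + K * (b - a1 * x)) \<le> f x" for x
    proof (cases "f x")
      case (real y)
      then have "K * (b - a1 * x) \<le> 0"
        using sep[of x y] True \<open>0 \<le> K\<close> by (simp add: mult_nonneg_nonpos)
      then have "ereal (p0 + q0 * x + K * (b - a1 * x)) \<le> ereal (p0 + q0 * x)" by simp
      also have "\<dots> \<le> f x" by (rule min0)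
      finally show ?thesis .
    qed (use not_MInf in auto)
    moreover have "K * (b - a1 * m) = \<bar>c - p0 - q0 * m\<bar> + 1"
      using pos by (simp add: K_def)
    then have "c < p0 + q0 * m + K * (b - a1 * m)" by linarith
    ultimately show thesis
      using that[of "p0 + K * b" "q0 - K * a1"] by (simp add: algebra_simps)
  qed
qed

section \<open>Monotonicity of hfun\<close>

lemma persp_not_MInf: "admissible_f f \<Longrightarrow> persp f b a \<noteq> -\<infinity>"
  using admissible_f_not_MInf[of f] by (auto simp: persp_def)

lemma hfun_self:
  assumes "admissible_f f" "0 \<le> z" "z \<le> 1"
  shows "hfun f z z = 0"
  using assms admissible_f_one[OF assms(1)] by (auto simp: hfun_def persp_def)

lemma hfun_nonneg:
  assumes adm: "admissible_f f" and z: "0 \<le> z" "z \<le> 1" and b: "0 \<le> b" "b \<le> 1"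
  shows "0 \<le> hfun f z b"
proof -
  note not_MInf = admissible_f_not_MInf[OF adm] and f1 = admissible_f_one[OF adm]
  consider "b = 0" | "b = 1" | "0 < b \<and> b < 1" using b by linarith
  then show ?thesis
  proof cases
    case 1
    then show ?thesis using f1 not_MInf[of "1 - z"] by (auto simp: hfun_def persp_def)
  next
    case 2
    then show ?thesis using f1 not_MInf[of z] by (auto simp: hfun_def persp_def)
  next
    case 3
    have "(1 - (1 - b)) * (z / b) + (1 - b) * ((1 - z) / (1 - b)) = 1"
      using 3 by (simp add: field_simps)
    then have "0 \<le> ereal (1 - (1 - b)) * f (z / b) + ereal (1 - b) * f ((1 - z) / (1 - b))"
      using admissible_f_convex[OF adm, of "1 - b" "z / b" "(1 - z) / (1 - b)"] 3 f1 by simp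
    then show ?thesis using 3 by (simp add: hfun_def persp_def)
  qed
qed

text \<open>Convexity of f between 1 and a / c2, using f 1 = 0.\<close>
lemma persp_le_scaled:
  assumes adm: "admissible_f f" and c1: "0 < c1" and c2: "0 < c2"
    and u: "0 \<le> u" "u * c2 \<le> c1" and a: "c1 - a = u * (c2 - a)"
  shows "persp f c1 a \<le> ereal u * persp f c2 a"
proof -
  define l where "l = u * c2 / c1"
  have l: "0 \<le> l" "l \<le> 1" using c1 c2 u by (auto simp: l_def)
  have "(1 - l) * 1 + l * (a / c2) = a / c1"
    using c1 c2 a by (simp add: l_def field_simps)
  then have "f (a / c1) \<le> ereal l * f (a / c2)"
    using admissible_f_convex[OF adm l, of 1 "a / c2"] admissible_f_one[OF adm] by simp
  then have "ereal c1 * f (a / c1) \<le> ereal c1 * (ereal l * f (a / c2))"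
    by (rule ereal_mult_left_mono) (use c1 in simp)
  also have "\<dots> = ereal (c1 * l) * f (a / c2)" by (simp add: mult.assoc[symmetric])
  also have "c1 * l = u * c2" using c1 by (simp add: l_def)
  finally show ?thesis using c1 c2 by (simp add: persp_def mult.assoc[symmetric])
qed

lemma hfun_mono:
  assumes adm: "admissible_f f" and z: "0 \<le> z" "z \<le> b1" and b: "b1 \<le> b2" "b2 \<le> 1"
  shows "hfun f z b1 \<le> hfun f z b2"
proof -
  have nonneg: "0 \<le> hfun f z b2" using hfun_nonneg[OF adm] z b by simp
  consider "b1 = b2" | "z = b1" | "z < b1 \<and> b1 < b2 \<and> b2 = 1" | "z < b1 \<and> b1 < b2 \<and> b2 < 1"
    using z b by linarith
  then show ?thesis
  proof cases
    case 1
    then show ?thesis by simp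
  next
    case 2
    then show ?thesis using hfun_self[OF adm] nonneg z b by simp
  next
    case 3
    then show ?thesis using admissible_f_not_MInf[OF adm, of z] z by (simp add: hfun_def persp_def)
  next
    case 4
    define u where "u = (b1 - z) / (b2 - z)"
    have u: "0 \<le> u" "u \<le> 1" using 4 z by (auto simp: u_def field_simps)
    have "u * b2 \<le> b1"
    proof -
      have "(b1 - z) * b2 \<le> b1 * (b2 - z)" using 4 z by (simp add: algebra_simps mult_right_mono)
      then show ?thesis using 4 by (simp add: u_def field_simps)
    qed
    moreover have "u * (1 - b2) \<le> 1 - b1"
    proof -
      have "0 \<le> (b2 - b1) * (1 - z)" using 4 by simp
      then have "(b1 - z) * (1 - b2) \<le> (1 - b1) * (b2 - z)" by (simp add: algebra_simps)
      then show ?thesis using 4 by (simp add: u_def field_simps)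
    qed
    moreover have "b1 - z = u * (b2 - z)" using 4 by (simp add: u_def)
    ultimately have "hfun f z b1 \<le> ereal u * persp f b2 z + ereal u * persp f (1 - b2) (1 - z)"
      unfolding hfun_def using 4 z u
      by (intro add_mono persp_le_scaled[OF adm]) (simp_all add: algebra_simps)
    also have "\<dots> = ereal u * hfun f z b2"
      unfolding hfun_def using persp_not_MInf[OF adm] by (simp add: ereal_distrib_left)
    also have "\<dots> \<le> 1 * hfun f z b2"
      using u nonneg by (intro ereal_mult_right_mono) auto
    finally show ?thesis by simp
  qed
qed

section \<open>Data processing inequality\<close>

lemma e2ennreal_uminus_le:
  assumes "ereal l \<le> v"
  shows "e2ennreal (- v) \<le> ennreal (- l)"
proof (cases v)
  case (real a)
  then show ?thesis using assms by (simp add: ennreal_leI)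
qed (use assms in \<open>auto simp: e2ennreal_neg\<close>)

lemma e2ennreal_parts_mono:
  assumes "ereal l \<le> v"
  shows "e2ennreal (- v) + ennreal l \<le> e2ennreal v + ennreal (- l)"
proof (cases v)
  case (real a)
  then have "l \<le> a" using assms by simp
  consider "0 \<le> l" | "l < 0 \<and> 0 \<le> a" | "a < 0" by linarith
  then show ?thesis
    by cases (use real \<open>l \<le> a\<close> in \<open>simp_all add: ennreal_neg ennreal_leI\<close>)
qed (use assms in \<open>auto simp: e2ennreal_neg\<close>)

lemma enn2ereal_diff_le_diff:
  fixes a c d e :: ennreal
  assumes "c + e \<le> a + d" "c \<noteq> \<infinity>" "d \<noteq> \<infinity>"
  shows "enn2ereal e - enn2ereal d \<le> enn2ereal a - enn2ereal c"
proof -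
  have "enn2ereal c + enn2ereal e \<le> enn2ereal a + enn2ereal d"
    using assms(1) by (simp add: less_eq_ennreal.rep_eq plus_ennreal.rep_eq)
  moreover obtain c' d' where "enn2ereal c = ereal c'" "enn2ereal d = ereal d'"
    using assms(2,3) by (cases c rule: ennreal_cases; cases d rule: ennreal_cases) auto
  ultimately show ?thesis using enn2ereal_nonneg[of a] enn2ereal_nonneg[of e]
    by (cases "enn2ereal a"; cases "enn2ereal e") auto
qed

lemma ereal_add_diff_add:
  fixes a1 a2 c1 c2 :: ereal
  assumes "0 \<le> a1" "0 \<le> a2" "0 \<le> c1" "0 \<le> c2" "c1 \<noteq> \<infinity>" "c2 \<noteq> \<infinity>"
  shows "(a1 + a2) - (c1 + c2) = (a1 - c1) + (a2 - c2)"
  using assms by (cases a1; cases a2; cases c1; cases c2) auto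

lemma integral_le_ereal_nn_integral_parts:
  fixes g :: "'a \<Rightarrow> real" and F :: "'a \<Rightarrow> ereal"
  assumes g: "integrable M g" and F[measurable]: "F \<in> borel_measurable M"
    and le: "\<And>x. x \<in> space M \<Longrightarrow> ereal (g x) \<le> F x"
  shows "(\<integral>\<^sup>+x. e2ennreal (- F x) \<partial>M) < \<infinity>"
    and "ereal (\<integral>x. g x \<partial>M)
      \<le> enn2ereal (\<integral>\<^sup>+x. e2ennreal (F x) \<partial>M) - enn2ereal (\<integral>\<^sup>+x. e2ennreal (- F x) \<partial>M)"
proof -
  have [measurable]: "g \<in> borel_measurable M" using g by auto
  have pos_fin: "(\<integral>\<^sup>+x. ennreal (g x) \<partial>M) \<noteq> \<infinity>"
    and neg_fin: "(\<integral>\<^sup>+x. ennreal (- g x) \<partial>M) \<noteq> \<infinity>"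
    using g unfolding real_integrable_def by auto
  have neg_le: "(\<integral>\<^sup>+x. e2ennreal (- F x) \<partial>M) \<le> (\<integral>\<^sup>+x. ennreal (- g x) \<partial>M)"
    by (rule nn_integral_mono) (use le e2ennreal_uminus_le in blast)
  then show neg_F_fin: "(\<integral>\<^sup>+x. e2ennreal (- F x) \<partial>M) < \<infinity>"
    using neg_fin by (simp add: le_less_trans less_top)
  have "(\<integral>\<^sup>+x. e2ennreal (- F x) \<partial>M) + (\<integral>\<^sup>+x. ennreal (g x) \<partial>M)
      = (\<integral>\<^sup>+x. e2ennreal (- F x) + ennreal (g x) \<partial>M)"
    by (rule nn_integral_add[symmetric]) auto
  also have "\<dots> \<le> (\<integral>\<^sup>+x. e2ennreal (F x) + ennreal (- g x) \<partial>M)"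
    by (rule nn_integral_mono) (use le e2ennreal_parts_mono in blast)
  also have "\<dots> = (\<integral>\<^sup>+x. e2ennreal (F x) \<partial>M) + (\<integral>\<^sup>+x. ennreal (- g x) \<partial>M)"
    by (rule nn_integral_add) auto
  finally have "enn2ereal (\<integral>\<^sup>+x. ennreal (g x) \<partial>M) - enn2ereal (\<integral>\<^sup>+x. ennreal (- g x) \<partial>M)
      \<le> enn2ereal (\<integral>\<^sup>+x. e2ennreal (F x) \<partial>M) - enn2ereal (\<integral>\<^sup>+x. e2ennreal (- F x) \<partial>M)"
    by (rule enn2ereal_diff_le_diff) (use neg_F_fin neg_fin in auto)
  moreover have "ereal (\<integral>x. g x \<partial>M)
      = enn2ereal (\<integral>\<^sup>+x. ennreal (g x) \<partial>M) - enn2ereal (\<integral>\<^sup>+x. ennreal (- g x) \<partial>M)"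
    unfolding real_lebesgue_integral_def[OF g] using pos_fin neg_fin
    by (cases "\<integral>\<^sup>+x. ennreal (g x) \<partial>M" rule: ennreal_cases;
        cases "\<integral>\<^sup>+x. ennreal (- g x) \<partial>M" rule: ennreal_cases) auto
  ultimately show "ereal (\<integral>x. g x \<partial>M)
      \<le> enn2ereal (\<integral>\<^sup>+x. e2ennreal (F x) \<partial>M) - enn2ereal (\<integral>\<^sup>+x. e2ennreal (- F x) \<partial>M)"
    by simp
qed

definition f_div_on :: "(real \<Rightarrow> ereal) \<Rightarrow> 'a measure \<Rightarrow> 'a measure \<Rightarrow> 'a set \<Rightarrow> ereal" where
  "f_div_on f P Q B =
     enn2ereal (\<integral>\<^sup>+ x. e2ennreal (f (enn2real (RN_deriv Q P x))) * indicator B x \<partial>Q)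
   - enn2ereal (\<integral>\<^sup>+ x. e2ennreal (- f (enn2real (RN_deriv Q P x))) * indicator B x \<partial>Q)"

lemma integral_RN_deriv_affine:
  fixes Q P :: "'a measure"
  assumes "prob_space Q" "prob_space P" and sP: "sets P = sets Q"
    and ac: "absolutely_continuous Q P" and B: "B \<in> sets Q"
  shows "integrable Q (\<lambda>x. (p + q * enn2real (RN_deriv Q P x)) * indicator B x)"
    and "(\<integral>x. (p + q * enn2real (RN_deriv Q P x)) * indicator B x \<partial>Q)
      = p * measure Q B + q * measure P B"
proof -
  interpret Q: prob_space Q by fact
  interpret P: prob_space P by fact
  have P_sf: "sigma_finite_measure P" by unfold_locales
  have ind: "integrable P (indicator B :: 'a \<Rightarrow> real)"
    using B sP by (intro integrable_real_indicator) (simp_all add: less_top[symmetric])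
  have [measurable]: "indicator B \<in> borel_measurable Q" using B by measurable
  have r_int: "integrable Q (\<lambda>x. enn2real (RN_deriv Q P x) * indicator B x)"
    using Q.RN_deriv_integrable[OF P_sf ac sP, of "indicator B"] ind by simp
  have r_eq: "(\<integral>x. enn2real (RN_deriv Q P x) * indicator B x \<partial>Q) = measure P B"
    using Q.RN_deriv_integral[OF P_sf ac sP, of "indicator B"] B sP by simp
  have affine: "(\<lambda>x. (p + q * enn2real (RN_deriv Q P x)) * indicator B x)
      = (\<lambda>x. p * indicator B x + q * (enn2real (RN_deriv Q P x) * indicator B x))"
    by (auto simp: fun_eq_iff split: split_indicator)
  have B_int: "integrable Q (indicator B :: 'a \<Rightarrow> real)"
    using B by (intro integrable_real_indicator) (simp_all add: less_top[symmetric])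
  show "integrable Q (\<lambda>x. (p + q * enn2real (RN_deriv Q P x)) * indicator B x)"
    unfolding affine using r_int B_int by auto
  show "(\<integral>x. (p + q * enn2real (RN_deriv Q P x)) * indicator B x \<partial>Q)
      = p * measure Q B + q * measure P B"
    unfolding affine using r_int B_int r_eq B by simp
qed

lemma affine_minorant_le_f_div_on:
  fixes Q P :: "'a measure"
  assumes adm: "admissible_f f" and Q: "prob_space Q" and P: "prob_space P"
    and sP: "sets P = sets Q" and ac: "absolutely_continuous Q P" and B: "B \<in> sets Q"
    and minorant: "\<And>x. ereal (p + q * x) \<le> f x"
  shows "(\<integral>\<^sup>+x. e2ennreal (- f (enn2real (RN_deriv Q P x))) * indicator B x \<partial>Q) < \<infinity>"
    and "ereal (p * measure Q B + q * measure P B) \<le> f_div_on f P Q B"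
proof -
  define r where "r x = enn2real (RN_deriv Q P x)" for x
  define F where "F x = (if x \<in> B then f (r x) else 0)" for x
  have [measurable]: "f \<in> borel_measurable borel" by (rule admissible_f_borel_measurable[OF adm])
  have [measurable]: "B \<in> sets Q" by (rule B)
  have F_meas: "F \<in> borel_measurable Q" unfolding F_def r_def by measurable
  have parts: "e2ennreal (F x) = e2ennreal (f (r x)) * indicator B x"
    "e2ennreal (- F x) = e2ennreal (- f (r x)) * indicator B x" for x
    by (simp_all add: F_def split: split_indicator)
  have le: "ereal ((p + q * r x) * indicator B x) \<le> F x" for x
    using minorant[of "r x"] by (simp add: F_def split: split_indicator)
  note main = integral_le_ereal_nn_integral_parts[OF
      integral_RN_deriv_affine(1)[OF Q P sP ac B, of p q, folded r_def] F_meas le]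
  show "(\<integral>\<^sup>+x. e2ennreal (- f (enn2real (RN_deriv Q P x))) * indicator B x \<partial>Q) < \<infinity>"
    using main(1) unfolding parts r_def .
  show "ereal (p * measure Q B + q * measure P B) \<le> f_div_on f P Q B"
    using main(2) unfolding parts f_div_on_def r_def integral_RN_deriv_affine(2)[OF Q P sP ac B] .
qed

text \<open>Jensen's inequality on B, via the affine minorants of f.\<close>
lemma persp_le_f_div_on:
  fixes Q P :: "'a measure"
  assumes adm: "admissible_f f" and Q: "prob_space Q" and P: "prob_space P"
    and sP: "sets P = sets Q" and ac: "absolutely_continuous Q P" and B: "B \<in> sets Q"
  shows "persp f (measure Q B) (measure P B) \<le> f_div_on f P Q B"
proof (cases "measure Q B = 0")
  case True
  interpret Q: prob_space Q by fact
  have "B \<in> null_sets Q" using True B Q.emeasure_eq_measure by (simp add: null_sets_def)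
  moreover have "measure P B = 0"
    using ac \<open>B \<in> null_sets Q\<close> unfolding absolutely_continuous_def
    by (auto simp: measure_def null_sets_def)
  ultimately show ?thesis
    using True by (simp add: persp_def f_div_on_def nn_integral_null_set)
next
  case False
  then have QB: "0 < measure Q B" using measure_nonneg[of Q B] by linarith
  define m where "m = measure P B / measure Q B"
  have persp_eq: "persp f (measure Q B) (measure P B) = ereal (measure Q B) * f m"
    using QB by (simp add: persp_def m_def)
  show ?thesis
  proof (rule ccontr)
    assume "\<not> ?thesis"
    then obtain c where c_above: "f_div_on f P Q B < ereal c"
      and c_below: "ereal c < ereal (measure Q B) * f m"
      using ereal_dense2 persp_eq by (metis not_le)
    have "ereal (c / measure Q B) < f m"
    proof (cases "f m")
      case (real v)
      then show ?thesis using c_below QB by (simp add: divide_less_eq mult.commute)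
    qed (use admissible_f_not_MInf[OF adm, of m] in auto)
    then obtain p q where minorant: "\<And>x. ereal (p + q * x) \<le> f x"
      and "c / measure Q B < p + q * m"
      using admissible_f_affine_minorant[OF adm] by metis
    then have "c < p * measure Q B + q * measure P B"
      using QB by (simp add: m_def divide_less_eq algebra_simps)
    then have "ereal c < ereal (p * measure Q B + q * measure P B)" by simp
    also have "\<dots> \<le> f_div_on f P Q B"
      by (rule affine_minorant_le_f_div_on(2)[OF adm Q P sP ac B minorant])
    finally show False using c_above by simp
  qed
qed

lemma f_div_on_neg_part_finite:
  fixes Q P :: "'a measure"
  assumes adm: "admissible_f f" and "prob_space Q" "prob_space P"
    and "sets P = sets Q" "absolutely_continuous Q P" "B \<in> sets Q"
  shows "(\<integral>\<^sup>+x. e2ennreal (- f (enn2real (RN_deriv Q P x))) * indicator B x \<partial>Q) < \<infinity>"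
proof -
  have "ereal (-1) < f 1" using admissible_f_one[OF adm] by simp
  then obtain p q where "\<And>x. ereal (p + q * x) \<le> f x"
    using admissible_f_affine_minorant[OF adm] by metis
  from affine_minorant_le_f_div_on(1)[OF assms this] show ?thesis .
qed

lemma f_div_split:
  fixes Q P :: "'a measure"
  assumes adm: "admissible_f f" and "prob_space Q" "prob_space P"
    and "sets P = sets Q" "absolutely_continuous Q P" and A: "A \<in> sets Q"
  shows "f_div f P Q = f_div_on f P Q A + f_div_on f P Q (space Q - A)"
proof -
  have [measurable]: "f \<in> borel_measurable borel" by (rule admissible_f_borel_measurable[OF adm])
  have [measurable]: "A \<in> sets Q" by (rule A)
  have nn_split: "(\<integral>\<^sup>+x. G x \<partial>Q)
      = (\<integral>\<^sup>+x. G x * indicator A x \<partial>Q) + (\<integral>\<^sup>+x. G x * indicator (space Q - A) x \<partial>Q)"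
    if [measurable]: "G \<in> borel_measurable Q" for G :: "'a \<Rightarrow> ennreal"
  proof -
    have "(\<integral>\<^sup>+x. G x \<partial>Q) = (\<integral>\<^sup>+x. G x * indicator A x + G x * indicator (space Q - A) x \<partial>Q)"
      by (rule nn_integral_cong) (auto split: split_indicator)
    also have "\<dots> = (\<integral>\<^sup>+x. G x * indicator A x \<partial>Q) + (\<integral>\<^sup>+x. G x * indicator (space Q - A) x \<partial>Q)"
      by (rule nn_integral_add) auto
    finally show ?thesis .
  qed
  have "space Q - A \<in> sets Q" using A by auto
  note fin = f_div_on_neg_part_finite[OF assms(1-5) A] f_div_on_neg_part_finite[OF assms(1-5) this]
  show ?thesis
    unfolding f_div_def f_div_on_def
    by (subst (1 2) nn_split, measurable, unfold plus_ennreal.rep_eq, rule ereal_add_diff_add)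
      (use fin in \<open>auto simp: less_top enn2ereal_eq_top_iff\<close>)
qed

lemma hfun_le_f_div:
  fixes Q P :: "'a measure"
  assumes adm: "admissible_f f" and Q: "prob_space Q" and P: "prob_space P"
    and sP: "sets P = sets Q" and ac: "absolutely_continuous Q P" and A: "A \<in> sets Q"
  shows "hfun f (measure P A) (measure Q A) \<le> f_div f P Q"
proof -
  interpret Q: prob_space Q by fact
  interpret P: prob_space P by fact
  have Ac: "space Q - A \<in> sets Q" using A by auto
  have "measure Q (space Q - A) = 1 - measure Q A" using Q.prob_compl[OF A] .
  moreover have "measure P (space Q - A) = 1 - measure P A"
    using P.prob_compl[of A] A sP sets_eq_imp_space_eq[OF sP] by simp
  ultimately show ?thesis
    unfolding hfun_def f_div_split[OF assms]
    using persp_le_f_div_on[OF assms] persp_le_f_div_on[OF adm Q P sP ac Ac]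
    by (metis add_mono)
qed

section \<open>Two-point densities\<close>

lemma enn2ereal_pos_minus_neg_part:
  assumes "v \<noteq> -\<infinity>" "0 \<le> c"
  shows "enn2ereal (e2ennreal v * ennreal c) - enn2ereal (e2ennreal (- v) * ennreal c) = ereal c * v"
proof (cases v)
  case (real r)
  consider "0 \<le> r" | "r < 0" by linarith
  then show ?thesis
    by cases (use real assms(2) in \<open>simp_all add: ennreal_neg ennreal_mult[symmetric]
        zero_ennreal.rep_eq mult_nonpos_nonneg\<close>)
next
  case PInf
  then show ?thesis using assms(2)
    by (cases "c = 0") (simp_all add: zero_ereal_def[symmetric] e2ennreal_neg ennreal_mult_top)
qed (use assms in simp)

lemma f_div_on_const_RN_deriv:
  fixes Q P :: "'a measure"
  assumes adm: "admissible_f f" and "finite_measure Q" and B: "B \<in> sets Q" and a: "0 \<le> a"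
    and RN: "AE x in Q. x \<in> B \<longrightarrow> RN_deriv Q P x = ennreal a"
  shows "f_div_on f P Q B = ereal (measure Q B) * f a"
proof -
  interpret Q: finite_measure Q by fact
  have const: "(\<integral>\<^sup>+x. G (enn2real (RN_deriv Q P x)) * indicator B x \<partial>Q) = G a * ennreal (measure Q B)"
    for G :: "real \<Rightarrow> ennreal"
  proof -
    have "(\<integral>\<^sup>+x. G (enn2real (RN_deriv Q P x)) * indicator B x \<partial>Q) = (\<integral>\<^sup>+x. G a * indicator B x \<partial>Q)"
      by (rule nn_integral_cong_AE) (use RN a in \<open>auto split: split_indicator\<close>)
    then show ?thesis using B by (simp add: nn_integral_cmult_indicator Q.emeasure_eq_measure)
  qed
  show ?thesis
    unfolding f_div_on_def const[of "\<lambda>y. e2ennreal (f y)"] const[of "\<lambda>y. e2ennreal (- f y)"]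
    by (rule enn2ereal_pos_minus_neg_part) (simp_all add: admissible_f_not_MInf[OF adm])
qed

lemma emeasure_two_point_density:
  assumes "A \<in> sets Q" "X \<in> sets Q"
  shows "emeasure (density Q (\<lambda>x. ennreal a * indicator A x + ennreal b * indicator (space Q - A) x)) X
    = ennreal a * emeasure Q (A \<inter> X) + ennreal b * emeasure Q ((space Q - A) \<inter> X)"
proof -
  have [measurable]: "A \<in> sets Q" "X \<in> sets Q" by (fact assms)+
  have "emeasure (density Q (\<lambda>x. ennreal a * indicator A x + ennreal b * indicator (space Q - A) x)) X
      = (\<integral>\<^sup>+x. ennreal a * indicator (A \<inter> X) x + ennreal b * indicator ((space Q - A) \<inter> X) x \<partial>Q)"
    by (subst emeasure_density) (auto intro!: nn_integral_cong split: split_indicator)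
  also have "\<dots> = ennreal a * emeasure Q (A \<inter> X) + ennreal b * emeasure Q ((space Q - A) \<inter> X)"
    by (simp add: nn_integral_add nn_integral_cmult_indicator)
  finally show ?thesis .
qed

lemma two_point_density:
  fixes Q :: "'a measure"
  assumes adm: "admissible_f f" and Q: "prob_space Q" and A: "A \<in> sets Q"
    and a: "0 \<le> a" and b: "0 \<le> b" and total: "a * measure Q A + b * (1 - measure Q A) = 1"
  defines "P \<equiv> density Q (\<lambda>x. ennreal a * indicator A x + ennreal b * indicator (space Q - A) x)"
  shows "prob_space P" "sets P = sets Q" "absolutely_continuous Q P"
    "measure P A = a * measure Q A"
    "f_div f P Q = ereal (measure Q A) * f a + ereal (1 - measure Q A) * f b"
proof -
  interpret Q: prob_space Q by fact
  define Ac where "Ac = space Q - A"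
  define g where "g x = ennreal a * indicator A x + ennreal b * indicator Ac x" for x
  have Ac: "Ac \<in> sets Q" using A by (simp add: Ac_def)
  have g_meas: "g \<in> borel_measurable Q" unfolding g_def using A Ac by measurable
  have P: "P = density Q g" unfolding P_def g_def Ac_def ..
  have QAc: "measure Q Ac = 1 - measure Q A" unfolding Ac_def using Q.prob_compl[OF A] .
  note emeasure_P = emeasure_two_point_density[OF A, of _ a b, folded P_def Ac_def]
  show sets_P: "sets P = sets Q" unfolding P by simp
  show "absolutely_continuous Q P" unfolding P by (rule absolutely_continuousI_density[OF g_meas])
  have "emeasure P (space P) = ennreal a * ennreal (measure Q A) + ennreal b * ennreal (1 - measure Q A)"
    using emeasure_P[of "space Q"] A Ac QAc sets.sets_into_space[OF A]
    by (simp add: P Ac_def Int_absorb2 Q.emeasure_eq_measure)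
  also have "\<dots> = 1"
    using a b total by (simp add: ennreal_mult[symmetric] ennreal_plus[symmetric])
  finally show P_prob: "prob_space P" by (rule prob_spaceI)
  have "Ac \<inter> A = {}" by (auto simp: Ac_def)
  then have "emeasure P A = ennreal (a * measure Q A)"
    using emeasure_P[OF A] a by (simp add: Q.emeasure_eq_measure ennreal_mult)
  then show "measure P A = a * measure Q A" using a by (simp add: measure_def)
  have RN: "AE x in Q. g x = RN_deriv Q P x"
    unfolding P by (rule Q.RN_deriv_unique[OF g_meas refl])
  have "AE x in Q. x \<in> A \<longrightarrow> RN_deriv Q P x = ennreal a"
    using RN by eventually_elim (auto simp: g_def Ac_def)
  moreover have "AE x in Q. x \<in> Ac \<longrightarrow> RN_deriv Q P x = ennreal b"
    using RN by eventually_elim (auto simp: g_def Ac_def split: split_indicator)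
  ultimately show "f_div f P Q = ereal (measure Q A) * f a + ereal (1 - measure Q A) * f b"
    unfolding f_div_split[OF adm Q P_prob sets_P \<open>absolutely_continuous Q P\<close> A, folded Ac_def]
    using f_div_on_const_RN_deriv[OF adm _ A a] f_div_on_const_RN_deriv[OF adm _ Ac b] QAc
    by (simp add: Q.finite_measure_axioms)
qed

text \<open>hfun f z \<beta> is the divergence of the two-point density moving the mass of A from
  \<beta> to z; when \<beta> \<in> {0, 1}, finiteness of hfun forces z = \<beta>.\<close>
lemma two_point_density_attains_hfun:
  fixes Q :: "'a measure"
  assumes adm: "admissible_f f" and Q: "prob_space Q" and A: "A \<in> sets Q"
    and z: "0 \<le> z" "z \<le> 1" and finite: "hfun f z (measure Q A) < \<infinity>"
  obtains P where "prob_space P" "sets P = sets Q" "absolutely_continuous Q P"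
    "measure P A = z" "f_div f P Q = hfun f z (measure Q A)"
proof -
  interpret Q: prob_space Q by fact
  define \<beta> where "\<beta> = measure Q A"
  note not_MInf = admissible_f_not_MInf[OF adm]
  obtain a b where ab: "0 \<le> a" "0 \<le> b" "a * \<beta> + b * (1 - \<beta>) = 1" "a * \<beta> = z"
    "ereal \<beta> * f a + ereal (1 - \<beta>) * f b = hfun f z \<beta>"
  proof -
    have "\<beta> \<noteq> 0 \<or> z = 0"
      using finite not_MInf[of "1 - z"] by (auto simp: \<beta>_def hfun_def persp_def split: if_splits)
    moreover have "\<beta> \<noteq> 1 \<or> z = 1"
      using finite not_MInf[of z] by (auto simp: \<beta>_def hfun_def persp_def split: if_splits)
    moreover have "0 \<le> \<beta>" "\<beta> \<le> 1" by (simp_all add: \<beta>_def)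
    ultimately consider "z = \<beta>" | "0 < \<beta> \<and> \<beta> < 1" by fastforce
    then show thesis
    proof cases
      case 1
      then show thesis
        using that[of 1 1] hfun_self[OF adm z] admissible_f_one[OF adm] by simp
    next
      case 2
      then show thesis
        using that[of "z / \<beta>" "(1 - z) / (1 - \<beta>)"] z by (simp add: hfun_def persp_def field_simps)
    qed
  qed
  note P = two_point_density[OF adm Q A ab(1,2) ab(3)[unfolded \<beta>_def]]
  show thesis using that[OF P(1-3)] P(4,5) ab(4,5) by (simp add: \<beta>_def)
qed

section \<open>The worst-case distribution function\<close>

lemma cInf_eq_cInf_subset:
  fixes A B :: "'a::conditionally_complete_lattice set"
  assumes "A \<noteq> {}" "bdd_below A" "A \<subseteq> B" "\<And>b. b \<in> B \<Longrightarrow> Inf A \<le> b"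
  shows "Inf B = Inf A"
proof (rule antisym)
  show "Inf B \<le> Inf A"
  proof (rule cInf_superset_mono)
    show "bdd_below B" by (rule bdd_belowI[of _ "Inf A"]) (rule assms(4))
  qed (use assms in auto)
  show "Inf A \<le> Inf B"
    using assms by (intro cInf_greatest) auto
qed

lemma g_one_le:
  assumes adm: "admissible_f f" and "0 \<le> \<rho>" and \<beta>: "0 \<le> \<beta>" "\<beta> \<le> 1" and z: "0 \<le> z" "z \<le> 1"
    and below: "z < \<beta> \<Longrightarrow> hfun f z \<beta> \<le> ereal \<rho>"
  shows "g_one f \<rho> \<beta> \<le> z"
proof -
  let ?Z = "{z \<in> {0..1}. hfun f z \<beta> \<le> ereal \<rho>}"
  have bdd: "bdd_below ?Z" by (rule bdd_belowI[of _ 0]) auto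
  have "\<beta> \<in> ?Z" using \<beta> hfun_self[OF adm \<beta>] \<open>0 \<le> \<rho>\<close> by simp
  then have "g_one f \<rho> \<beta> \<le> \<beta>" unfolding g_one_def using bdd by (rule cInf_lower)
  moreover have "g_one f \<rho> \<beta> \<le> z" if "z < \<beta>"
    unfolding g_one_def using z below[OF that] bdd by (intro cInf_lower) auto
  ultimately show ?thesis by (cases "z < \<beta>") auto
qed

lemma wsimplex_vertex: "k \<in> {1..d} \<Longrightarrow> (\<lambda>i. if i = k then 1 else 0) \<in> wsimplex d"
  by (simp add: wsimplex_def)

lemma wsimplex_comb_vertex:
  fixes F :: "nat \<Rightarrow> real"
  assumes "k \<in> {1..d}"
  shows "(\<Sum>i=1..d. (if i = k then 1 else 0) * F i) = F k"
proof -
  have "(\<Sum>i=1..d. (if i = k then 1 else 0) * F i) = (\<Sum>i=1..d. if i = k then F i else 0)"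
    by (rule sum.cong) auto
  then show ?thesis using assms by simp
qed

lemma wsimplex_comb_ge:
  fixes F :: "nat \<Rightarrow> real"
  assumes "w \<in> wsimplex d" "\<And>i. i \<in> {1..d} \<Longrightarrow> c \<le> F i"
  shows "c \<le> (\<Sum>i=1..d. w i * F i)"
proof -
  have "c = (\<Sum>i=1..d. w i * c)" using assms(1) by (simp add: wsimplex_def sum_distrib_right[symmetric])
  also have "\<dots> \<le> (\<Sum>i=1..d. w i * F i)"
    using assms by (intro sum_mono mult_left_mono) (auto simp: wsimplex_def)
  finally show ?thesis .
qed

lemma wsimplex_comb_le:
  fixes F :: "nat \<Rightarrow> real"
  assumes "w \<in> wsimplex d" "\<And>i. i \<in> {1..d} \<Longrightarrow> F i \<le> c"
  shows "(\<Sum>i=1..d. w i * F i) \<le> c"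
proof -
  have "(\<Sum>i=1..d. w i * F i) \<le> (\<Sum>i=1..d. w i * c)"
    using assms by (intro sum_mono mult_left_mono) (auto simp: wsimplex_def)
  also have "\<dots> = c" using assms(1) by (simp add: wsimplex_def sum_distrib_right[symmetric])
  finally show ?thesis .
qed

lemma hfun_le_hfun_wsimplex_comb:
  fixes F :: "nat \<Rightarrow> real"
  assumes adm: "admissible_f f" and "0 \<le> z" "z \<le> \<beta>" and w: "w \<in> wsimplex d"
    and F: "\<And>i. i \<in> {1..d} \<Longrightarrow> \<beta> \<le> F i \<and> F i \<le> 1"
  shows "hfun f z \<beta> \<le> hfun f z (\<Sum>i=1..d. w i * F i)"
  using assms wsimplex_comb_ge[OF w, of \<beta> F] wsimplex_comb_le[OF w, of F 1]
  by (intro hfun_mono[OF adm]) auto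

lemma g_vec_eq_g_one_Min:
  fixes F :: "nat \<Rightarrow> real"
  assumes adm: "admissible_f f" and "0 \<le> \<rho>" and "1 \<le> d"
    and F: "\<And>i. i \<in> {1..d} \<Longrightarrow> 0 \<le> F i \<and> F i \<le> 1"
  shows "g_vec f \<rho> d F = g_one f \<rho> (Min (F ` {1..d}))"
proof -
  define Fmin where "Fmin = Min (F ` {1..d})"
  have "Fmin \<in> F ` {1..d}" unfolding Fmin_def using \<open>1 \<le> d\<close> by (intro Min_in) auto
  then obtain k where k: "k \<in> {1..d}" "F k = Fmin" by auto
  have Fmin_le: "Fmin \<le> F i" if "i \<in> {1..d}" for i unfolding Fmin_def using that by simp
  have Fmin01: "0 \<le> Fmin" "Fmin \<le> 1" using F[OF k(1)] k(2) by auto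
  let ?Z = "{z \<in> {0..1}. hfun f z Fmin \<le> ereal \<rho>}"
  let ?Zvec = "{z \<in> {0..1}. (INF w\<in>wsimplex d. hfun f z (\<Sum>i=1..d. w i * F i)) \<le> ereal \<rho>}"
  have "Inf ?Zvec = Inf ?Z"
  proof (rule cInf_eq_cInf_subset)
    show "?Z \<noteq> {}" using Fmin01 hfun_self[OF adm Fmin01] \<open>0 \<le> \<rho>\<close> by auto
    show "bdd_below ?Z" by (rule bdd_belowI[of _ 0]) auto
    show "?Z \<subseteq> ?Zvec"
    proof (intro subsetI CollectI conjI)
      fix z assume "z \<in> ?Z"
      then show "z \<in> {0..1}" by simp
      have "(INF w\<in>wsimplex d. hfun f z (\<Sum>i=1..d. w i * F i))
          \<le> hfun f z (\<Sum>i=1..d. (if i = k then 1 else 0) * F i)"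
        by (rule INF_lower[OF wsimplex_vertex[OF k(1)]])
      also have "\<dots> = hfun f z Fmin" using wsimplex_comb_vertex[OF k(1), of F] k(2) by simp
      also have "\<dots> \<le> ereal \<rho>" using \<open>z \<in> ?Z\<close> by simp
      finally show "(INF w\<in>wsimplex d. hfun f z (\<Sum>i=1..d. w i * F i)) \<le> ereal \<rho>" .
    qed
    fix z assume z: "z \<in> ?Zvec"
    have "g_one f \<rho> Fmin \<le> z"
    proof (rule g_one_le[OF adm \<open>0 \<le> \<rho>\<close> Fmin01])
      show "0 \<le> z" "z \<le> 1" using z by auto
      assume "z < Fmin"
      have "hfun f z Fmin \<le> (INF w\<in>wsimplex d. hfun f z (\<Sum>i=1..d. w i * F i))"
        using hfun_le_hfun_wsimplex_comb[OF adm \<open>0 \<le> z\<close>] \<open>z < Fmin\<close> Fmin_le F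
        by (intro INF_greatest) auto
      also have "\<dots> \<le> ereal \<rho>" using z by simp
      finally show "hfun f z Fmin \<le> ereal \<rho>" .
    qed
    then show "Inf ?Z \<le> z" by (simp add: g_one_def)
  qed
  then show ?thesis unfolding g_vec_def g_one_def Fmin_def .
qed

lemma in_conv_hull_vertex:
  assumes "k \<in> {1..d}"
  shows "in_conv_hull d S s (distr (S k) borel s)"
  unfolding in_conv_hull_def
proof (intro conjI bexI[OF _ wsimplex_vertex[OF assms]] ballI)
  fix B :: "real set"
  have "(\<Sum>i=1..d. ennreal (if i = k then 1 else 0) * emeasure (distr (S i) borel s) B)
      = (\<Sum>i=1..d. if i = k then emeasure (distr (S k) borel s) B else 0)"
    by (rule sum.cong) auto
  then show "emeasure (distr (S k) borel s) B
      = (\<Sum>i=1..d. ennreal (if i = k then 1 else 0) * emeasure (distr (S i) borel s) B)"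
    using assms by simp
qed simp

lemma in_conv_hull_measure:
  assumes hull: "in_conv_hull d S s S0"
    and prob: "\<And>i. i \<in> {1..d} \<Longrightarrow> prob_space (distr (S i) borel s)"
  obtains w where "w \<in> wsimplex d" "prob_space S0"
    "\<And>A. A \<in> sets borel \<Longrightarrow> measure S0 A = (\<Sum>i=1..d. w i * measure (distr (S i) borel s) A)"
proof -
  let ?\<mu> = "\<lambda>i. distr (S i) borel s"
  obtain w where sets_S0: "sets S0 = sets borel" and w: "w \<in> wsimplex d"
    and S0: "\<And>A. A \<in> sets borel \<Longrightarrow> emeasure S0 A = (\<Sum>i=1..d. ennreal (w i) * emeasure (?\<mu> i) A)"
    using hull unfolding in_conv_hull_def by auto
  have w_nonneg: "\<And>i. i \<in> {1..d} \<Longrightarrow> 0 \<le> w i" using w by (simp add: wsimplex_def)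
  have emeasure_S0: "emeasure S0 A = ennreal (\<Sum>i=1..d. w i * measure (?\<mu> i) A)"
    if A: "A \<in> sets borel" for A
  proof -
    have "emeasure S0 A = (\<Sum>i=1..d. ennreal (w i * measure (?\<mu> i) A))"
      unfolding S0[OF A]
    proof (rule sum.cong[OF refl])
      fix i assume i: "i \<in> {1..d}"
      interpret prob_space "?\<mu> i" by (rule prob[OF i])
      show "ennreal (w i) * emeasure (?\<mu> i) A = ennreal (w i * measure (?\<mu> i) A)"
        using w_nonneg[OF i] by (simp add: emeasure_eq_measure ennreal_mult)
    qed
    also have "\<dots> = ennreal (\<Sum>i=1..d. w i * measure (?\<mu> i) A)"
      using w_nonneg by (intro sum_ennreal) simp
    finally show ?thesis .
  qed
  have "space S0 = UNIV" using sets_eq_imp_space_eq[OF sets_S0] by simp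
  moreover have "measure (?\<mu> i) UNIV = 1" if "i \<in> {1..d}" for i
    using prob_space.prob_space[OF prob[OF that]] by simp
  ultimately have "emeasure S0 (space S0) = ennreal (\<Sum>i=1..d. w i)"
    using emeasure_S0[of UNIV] by simp
  then have "prob_space S0" using w by (intro prob_spaceI) (simp add: wsimplex_def)
  moreover have "measure S0 A = (\<Sum>i=1..d. w i * measure (?\<mu> i) A)" if "A \<in> sets borel" for A
    using emeasure_S0[OF that] w_nonneg
    by (intro measure_eq_emeasure_eq_ennreal sum_nonneg) (simp_all add: mult_nonneg_nonneg)
  ultimately show thesis using that w by blast
qed

lemma amb_set_measure_ge_g_one:
  assumes adm: "admissible_f f" and "0 \<le> \<rho>" and P_amb: "P \<in> amb_set f \<rho> d S s"
    and prob: "\<And>i. i \<in> {1..d} \<Longrightarrow> prob_space (distr (S i) borel s)"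
    and A: "A \<in> sets borel" and \<beta>: "0 \<le> \<beta>" "\<beta> \<le> 1"
    and below: "\<And>i. i \<in> {1..d} \<Longrightarrow> \<beta> \<le> measure (distr (S i) borel s) A"
  shows "g_one f \<rho> \<beta> \<le> measure P A"
proof -
  obtain S0 where P: "prob_space P" "sets P = sets borel"
    and hull: "in_conv_hull d S s S0" and ac: "absolutely_continuous S0 P"
    and div: "f_div f P S0 \<le> ereal \<rho>"
    using P_amb unfolding amb_set_def by blast
  obtain w where w: "w \<in> wsimplex d" and S0: "prob_space S0"
    and S0_A: "measure S0 A = (\<Sum>i=1..d. w i * measure (distr (S i) borel s) A)"
    using in_conv_hull_measure[OF hull prob] A by metis
  have sets_S0: "sets S0 = sets borel" using hull by (simp add: in_conv_hull_def)
  show ?thesis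
  proof (rule g_one_le[OF adm \<open>0 \<le> \<rho>\<close> \<beta>])
    show "0 \<le> measure P A" "measure P A \<le> 1" using prob_space.prob_le_1[OF P(1)] by auto
    assume "measure P A < \<beta>"
    have "hfun f (measure P A) \<beta> \<le> hfun f (measure P A) (measure S0 A)"
      unfolding S0_A using below prob_space.prob_le_1[OF prob] \<open>measure P A < \<beta>\<close>
      by (intro hfun_le_hfun_wsimplex_comb[OF adm _ _ w]) auto
    also have "\<dots> \<le> f_div f P S0"
      using P sets_S0 ac A by (intro hfun_le_f_div[OF adm S0]) auto
    finally show "hfun f (measure P A) \<beta> \<le> ereal \<rho>" using div by simp
  qed
qed

lemma amb_set_attains_vertex:
  assumes adm: "admissible_f f" and k: "k \<in> {1..d}"
    and prob: "prob_space (distr (S k) borel s)" and A: "A \<in> sets borel"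
    and z: "0 \<le> z" "z \<le> 1" and hz: "hfun f z (measure (distr (S k) borel s) A) \<le> ereal \<rho>"
  obtains P where "P \<in> amb_set f \<rho> d S s" "measure P A = z"
proof -
  have "hfun f z (measure (distr (S k) borel s) A) < \<infinity>" using hz by auto
  then obtain P where P: "prob_space P" "sets P = sets (distr (S k) borel s)"
    "absolutely_continuous (distr (S k) borel s) P" "measure P A = z"
    "f_div f P (distr (S k) borel s) = hfun f z (measure (distr (S k) borel s) A)"
    using two_point_density_attains_hfun[OF adm prob _ z] A by (metis sets_distr)
  have "P \<in> amb_set f \<rho> d S s"
    unfolding amb_set_def using P hz in_conv_hull_vertex[OF k, of S s]
    by (auto intro!: exI[of _ "distr (S k) borel s"])
  then show thesis using P(4) by (rule that)
qed

lemma worst_cdf_eq_g_one_Min: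
  assumes adm: "admissible_f f" and "0 \<le> \<rho>" and "1 \<le> d"
    and S: "\<And>i. i \<in> {1..d} \<Longrightarrow> prob_space (S i)"
    and s: "\<And>i. i \<in> {1..d} \<Longrightarrow> s \<in> borel_measurable (S i)"
  shows "worst_cdf f \<rho> d S s t = g_one f \<rho> (Min ((\<lambda>i. push_cdf (S i) s t) ` {1..d}))"
proof -
  define F where "F i = push_cdf (S i) s t" for i
  define Fmin where "Fmin = Min (F ` {1..d})"
  have prob: "prob_space (distr (S i) borel s)" if "i \<in> {1..d}" for i
    using prob_space.prob_space_distr[OF S[OF that] s[OF that]] .
  have F: "F i = measure (distr (S i) borel s) {..t}" for i unfolding F_def push_cdf_def ..
  have "Fmin \<in> F ` {1..d}" unfolding Fmin_def using \<open>1 \<le> d\<close> by (intro Min_in) auto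
  then obtain k where k: "k \<in> {1..d}" "F k = Fmin" by auto
  have Fmin01: "0 \<le> Fmin" "Fmin \<le> 1"
    using prob_space.prob_le_1[OF prob[OF k(1)]] k(2) by (auto simp: F)
  let ?Z = "{z \<in> {0..1}. hfun f z Fmin \<le> ereal \<rho>}"
  have "Inf ((\<lambda>P. measure P {..t}) ` amb_set f \<rho> d S s) = Inf ?Z"
  proof (rule cInf_eq_cInf_subset)
    show "?Z \<noteq> {}" using Fmin01 hfun_self[OF adm Fmin01] \<open>0 \<le> \<rho>\<close> by auto
    show "bdd_below ?Z" by (rule bdd_belowI[of _ 0]) auto
    show "?Z \<subseteq> (\<lambda>P. measure P {..t}) ` amb_set f \<rho> d S s"
    proof
      fix z assume "z \<in> ?Z"
      then have z: "0 \<le> z" "z \<le> 1" "hfun f z (measure (distr (S k) borel s) {..t}) \<le> ereal \<rho>"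
        using k(2) by (auto simp: F)
      obtain P where "P \<in> amb_set f \<rho> d S s" "measure P {..t} = z"
        by (rule amb_set_attains_vertex[where S = S and s = s, OF adm k(1) prob[OF k(1)] _ z]) simp
      then show "z \<in> (\<lambda>P. measure P {..t}) ` amb_set f \<rho> d S s" by force
    qed
    fix v assume "v \<in> (\<lambda>P. measure P {..t}) ` amb_set f \<rho> d S s"
    then obtain P where "P \<in> amb_set f \<rho> d S s" "v = measure P {..t}" by blast
    moreover have "Fmin \<le> measure (distr (S i) borel s) {..t}" if "i \<in> {1..d}" for i
      unfolding Fmin_def F[symmetric] using that by simp
    ultimately have "g_one f \<rho> Fmin \<le> v"
      using amb_set_measure_ge_g_one[OF adm \<open>0 \<le> \<rho>\<close> _ prob _ Fmin01] by simp
    then show "Inf ?Z \<le> v" by (simp add: g_one_def)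
  qed
  then show ?thesis unfolding worst_cdf_def g_one_def Fmin_def F_def .
qed

theorem lemma18:
  fixes X :: "'x measure" and Y :: "'y measure"
    and s :: "'x \<times> 'y \<Rightarrow> real"
    and S :: "nat \<Rightarrow> ('x \<times> 'y) measure"
    and d :: nat and f :: "real \<Rightarrow> ereal" and \<rho> :: real and t :: real
  assumes "s \<in> borel_measurable (X \<Otimes>\<^sub>M Y)"
    and "d \<ge> 1"
    and "\<And>i. i \<in> {1..d} \<Longrightarrow> prob_space (S i)"
    and "\<And>i. i \<in> {1..d} \<Longrightarrow> sets (S i) = sets (X \<Otimes>\<^sub>M Y)"
    and "admissible_f f"
    and "\<rho> > 0"
  shows "worst_cdf f \<rho> d S s t = g_vec f \<rho> d (\<lambda>i. push_cdf (S i) s t)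
       \<and> g_vec f \<rho> d (\<lambda>i. push_cdf (S i) s t)
           = g_one f \<rho> (Min ((\<lambda>i. push_cdf (S i) s t) ` {1..d}))"
proof -
  have s: "s \<in> borel_measurable (S i)" if "i \<in> {1..d}" for i
    using assms(1) by (simp add: measurable_cong_sets[OF assms(4)[OF that] refl])
  have "0 \<le> push_cdf (S i) s t \<and> push_cdf (S i) s t \<le> 1" if "i \<in> {1..d}" for i
    unfolding push_cdf_def
    using prob_space.prob_le_1[OF prob_space.prob_space_distr[OF assms(3)[OF that] s[OF that]]]
    by simp
  then have "g_vec f \<rho> d (\<lambda>i. push_cdf (S i) s t)
      = g_one f \<rho> (Min ((\<lambda>i. push_cdf (S i) s t) ` {1..d}))"
    using assms(2,5,6) by (intro g_vec_eq_g_one_Min) auto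
  moreover have "worst_cdf f \<rho> d S s t = g_one f \<rho> (Min ((\<lambda>i. push_cdf (S i) s t) ` {1..d}))"
    using assms(2,3,5,6) s by (intro worst_cdf_eq_g_one_Min) auto
  ultimately show ?thesis by simp
qed

end
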